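(* Let $X$ be an infinite-dimensional real normed space. There exists a $1$-Lipschitz approximately convex function $f:X\to\mathbb{R}$ with the following property: for every $M>0$ there exists $R>0$ such that for every convex function $g:B_R(X)\to\mathbb{R}$, $$\sup_{x\in B_R(X)}|f(x)-g(x)|>M.$$ In particular $\sup_{x\in X}|f(x)-g(x)|=\infty$ for every convex $g:X\to\mathbb{R}$.
   Context: A function $f$ on a convex set $C$ is approximately convex if $f(tx+(1-t)y)\le tf(x)+(1-t)f(y)+1$ for all $x,y\in C$, $t\in[0,1]$. $B_R(X)=\{x\in X:\|x\|\le R\}$. *)

theory Defs
  imports "HOL-Analysis.Analysis"
begin

definition approx_convex_on :: "'a::real_vector set \<Rightarrow> ('a \<Rightarrow> real) \<Rightarrow> bool" where
  "approx_convex_on C f \<longleftrightarrow>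
     (\<forall>x\<in>C. \<forall>y\<in>C. \<forall>t::real. 0 \<le> t \<and> t \<le> 1 \<longrightarrow>
        f (t *\<^sub>R x + (1 - t) *\<^sub>R y) \<le> t * f x + (1 - t) * f y + 1)"

definition infinite_dimensional :: "'a::real_vector itself \<Rightarrow> bool" where
  "infinite_dimensional (_::'a itself) \<longleftrightarrow> \<not> (\<exists>B::'a set. finite B \<and> span B = UNIV)"

end

theory Submission
  imports Defs
begin

text \<open>
  Choose a sequence \<open>u\<close> whose coordinate functionals have norm at most \<open>K j\<close> on the span of
  \<open>u 0, ..., u (N - 1)\<close> for every \<open>N\<close> (one-dimensional Hahn-Banach extensions), place vertices
  \<open>R j *\<^sub>R u j\<close> with \<open>R j\<close> large compared to \<open>K j\<close>, and let \<open>h\<close> be the distance to the vertices.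
  The function is the entropy envelope of \<open>h\<close>: the infimum of \<open>H \<mu> + (\<Sum>i. \<mu> i * h (y i))\<close> over
  all convex decompositions \<open>x = (\<Sum>i. \<mu> i *\<^sub>R y i)\<close>, where \<open>H\<close> is the Shannon entropy in bits.
  It is 1-Lipschitz like \<open>h\<close>, and it is approximately convex because merging two decompositions with
  weights \<open>t\<close> and \<open>1 - t\<close> adds the binary entropy of \<open>t\<close>, which is at most 1.
  It vanishes at the vertices, but at the barycentre of the \<open>m = 4 ^ (n + 1)\<close> vertices with
  indices in \<open>[m, 2 m)\<close> it is at least \<open>n\<close>: the coordinate functionals force every cheap
  decomposition to put mass close to \<open>1 / m\<close> near each of these vertices, which costs entropy
  about \<open>log m\<close>. By Jensen, a convex function within \<open>M\<close> of the envelope is at most \<open>M\<close> at the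
  barycentre, which is impossible once \<open>n > 2 M\<close>.
\<close>

section \<open>Sequences with uniformly bounded coordinate functionals\<close>

lemma linear_sum_biorthogonal:
  fixes u :: "nat \<Rightarrow> 'a::real_vector"
  assumes "linear \<phi>" "\<forall>i<N. \<phi> (u i) = (if i = j then 1 else 0)" "j < N"
  shows "\<phi> (\<Sum>i<N. c i *\<^sub>R u i) = c j"
proof -
  have "\<phi> (\<Sum>i<N. c i *\<^sub>R u i) = (\<Sum>i<N. c i * \<phi> (u i))"
    using assms(1) by (simp add: linear_sum linear_cmul)
  also have "\<dots> = (\<Sum>i<N. if i = j then c i else 0)"
    using assms(2) by (intro sum.cong) auto
  also have "\<dots> = c j"
    using assms(3) by simp
  finally show ?thesis .
qed

lemma biorthogonal_expansion:
  fixes u :: "nat \<Rightarrow> 'a::real_vector"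
  assumes lin: "\<And>j. j < N \<Longrightarrow> linear (\<psi> j)"
    and biorth: "\<And>i j. i < N \<Longrightarrow> j < N \<Longrightarrow> \<psi> j (u i) = (if i = j then 1 else 0)"
    and x: "x \<in> span (u ` {..<N})"
  shows "x = (\<Sum>i<N. \<psi> i x *\<^sub>R u i)"
proof (rule linear_eq_on[OF _ _ x])
  show "linear (\<lambda>x. x)"
    by (rule linear_ident)
  show "linear (\<lambda>x. \<Sum>i<N. \<psi> i x *\<^sub>R u i)"
    using lin linear_compose[OF _ linear_scale_left] by (intro linear_compose_sum) (auto simp: o_def)
  fix b assume "b \<in> u ` {..<N}"
  then obtain j where "j < N" "b = u j" by blast
  then have "(\<Sum>i<N. \<psi> i b *\<^sub>R u i) = (\<Sum>i<N. if i = j then u i else 0)"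
    using biorth by (intro sum.cong) auto
  with \<open>j < N\<close> \<open>b = u j\<close> show "b = (\<Sum>i<N. \<psi> i b *\<^sub>R u i)"
    by simp
qed

lemma exists_linear_functional_vanishing_on_span:
  fixes y :: "'a::real_vector"
  assumes y: "y \<notin> span S"
  obtains \<alpha> :: "'a \<Rightarrow> real" where "linear \<alpha>" "\<alpha> y = 1" "\<forall>x\<in>span S. \<alpha> x = 0"
proof -
  obtain B where B: "B \<subseteq> span S" "independent B" "span S \<subseteq> span B"
    using maximal_independent_subset[of "span S"] by blast
  have "span B \<subseteq> span S"
    using B(1) by (rule span_minimal) (rule subspace_span)
  then have "y \<notin> span B"
    using y by blast
  then have "independent (insert y B)"
    using B(2) by (rule independent_insertI)
  from linear_independent_extend[OF this, of "\<lambda>x. if x = y then 1 else 0"]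
  obtain \<alpha> :: "'a \<Rightarrow> real"
    where \<alpha>: "linear \<alpha>" "\<forall>x\<in>insert y B. \<alpha> x = (if x = y then 1 else 0)"
    by blast
  have "\<alpha> b = 0" if "b \<in> B" for b
    using that \<alpha>(2) B(1) y by force
  then have "\<forall>x\<in>span S. \<alpha> x = 0"
    using B(3) linear_eq_0_on_span[OF \<alpha>(1)] by blast
  then show thesis
    using \<alpha> by (intro that) simp_all
qed

text \<open>The one-step Hahn-Banach argument: every lower bound for the value at \<open>y\<close> lies below every
  upper bound, so their supremum is an admissible value.\<close>

lemma bounded_extension_value:
  fixes \<phi> :: "'a::real_normed_vector \<Rightarrow> real"
  assumes lin: "linear \<phi>" and K: "0 \<le> K" and bound: "\<forall>x\<in>span S. \<bar>\<phi> x\<bar> \<le> K * norm x"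
  obtains c where "\<forall>s\<in>span S. \<phi> s + c \<le> K * norm (s + y)"
    and "\<forall>s\<in>span S. \<phi> s - c \<le> K * norm (s - y)"
proof -
  have sep: "\<phi> s - K * norm (s - y) \<le> K * norm (s' + y) - \<phi> s'"
    if "s \<in> span S" "s' \<in> span S" for s s'
  proof -
    have "\<phi> s + \<phi> s' = \<phi> (s + s')"
      using lin by (simp add: linear_add)
    also have "\<dots> \<le> K * norm (s + s')"
      using bound span_add[OF that] by fastforce
    also have "\<dots> \<le> K * (norm (s - y) + norm (s' + y))"
      using K norm_triangle_ineq[of "s - y" "s' + y"] by (intro mult_left_mono) simp_all
    finally show ?thesis by (simp add: algebra_simps)
  qed
  define A where "A = (\<lambda>s. \<phi> s - K * norm (s - y)) ` span S"
  have "A \<noteq> {}"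
    unfolding A_def using span_zero by blast
  moreover have "bdd_above A"
    unfolding A_def bdd_above_def using sep[OF _ span_zero] by blast
  ultimately have "\<phi> s - K * norm (s - y) \<le> Sup A" "Sup A \<le> K * norm (s + y) - \<phi> s"
    if "s \<in> span S" for s
    using that sep by (auto simp: A_def intro!: cSup_upper cSup_least)
  then show thesis
    by (intro that) (auto simp: algebra_simps)
qed

lemma linear_le_norm_span_insert:
  fixes \<psi> :: "'a::real_normed_vector \<Rightarrow> real"
  assumes lin: "linear \<psi>"
    and base: "\<And>s. s \<in> span S \<Longrightarrow> \<psi> s \<le> K * norm s"
    and plus: "\<And>s. s \<in> span S \<Longrightarrow> \<psi> (s + y) \<le> K * norm (s + y)"
    and minus: "\<And>s. s \<in> span S \<Longrightarrow> \<psi> (s - y) \<le> K * norm (s - y)"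
    and x: "x \<in> span (insert y S)"
  shows "\<psi> x \<le> K * norm x"
proof -
  have scaled: "\<psi> (t *\<^sub>R z) \<le> K * norm (t *\<^sub>R z)" if "0 < t" "\<psi> z \<le> K * norm z" for t z
  proof -
    have "\<psi> (t *\<^sub>R z) = t * \<psi> z"
      using lin by (simp add: linear_cmul)
    also have "\<dots> \<le> t * (K * norm z)"
      using that by (intro mult_left_mono) simp_all
    also have "\<dots> = K * norm (t *\<^sub>R z)"
      using that(1) by simp
    finally show ?thesis .
  qed
  obtain a where a: "x - a *\<^sub>R y \<in> span S"
    using x span_breakdown_eq by blast
  define s where "s = (1 / \<bar>a\<bar>) *\<^sub>R (x - a *\<^sub>R y)"
  have s: "s \<in> span S"
    unfolding s_def using a by (rule span_scale)
  consider "a = 0" | "0 < a" | "a < 0"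
    by linarith
  then show ?thesis
  proof cases
    case 1
    then show ?thesis
      using base a by simp
  next
    case 2
    then have "x = a *\<^sub>R (s + y)"
      by (simp add: s_def algebra_simps)
    then show ?thesis
      using scaled[OF 2 plus[OF s]] by simp
  next
    case 3
    then have "x = (- a) *\<^sub>R (s - y)"
      by (simp add: s_def algebra_simps)
    then show ?thesis
      using scaled[OF _ minus[OF s], of "- a"] 3 by simp
  qed
qed

lemma bounded_functional_extend_insert:
  fixes \<phi> :: "'a::real_normed_vector \<Rightarrow> real"
  assumes lin: "linear \<phi>" and K: "0 \<le> K" and bound: "\<forall>x\<in>span S. \<bar>\<phi> x\<bar> \<le> K * norm x"
    and y: "y \<notin> span S"
  obtains \<psi> where "linear \<psi>" "\<forall>x\<in>span S. \<psi> x = \<phi> x"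
    "\<forall>x\<in>span (insert y S). \<bar>\<psi> x\<bar> \<le> K * norm x"
proof -
  obtain c where plus: "\<forall>s\<in>span S. \<phi> s + c \<le> K * norm (s + y)"
    and minus: "\<forall>s\<in>span S. \<phi> s - c \<le> K * norm (s - y)"
    using bounded_extension_value[OF lin K bound] by blast
  obtain \<alpha> :: "'a \<Rightarrow> real" where \<alpha>: "linear \<alpha>" "\<alpha> y = 1" "\<forall>x\<in>span S. \<alpha> x = 0"
    using exists_linear_functional_vanishing_on_span[OF y] by blast
  define \<psi> where "\<psi> x = \<phi> x + (c - \<phi> y) * \<alpha> x" for x
  have lin_\<psi>: "linear \<psi>"
    unfolding \<psi>_def linear_iff using lin \<alpha>(1) by (simp add: linear_add linear_cmul algebra_simps)
  have \<psi>_span: "\<psi> s = \<phi> s" if "s \<in> span S" for s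
    using \<alpha>(3) that by (simp add: \<psi>_def)
  have \<psi>_shift: "\<psi> (s + e *\<^sub>R y) = \<phi> s + e * c" if "s \<in> span S" for s e
    using lin \<alpha> that by (simp add: \<psi>_def linear_add linear_cmul algebra_simps)
  have upper: "\<psi> x \<le> K * norm x" if "x \<in> span (insert y S)" for x
  proof (rule linear_le_norm_span_insert[OF lin_\<psi> _ _ _ that])
    show "\<psi> s \<le> K * norm s" if "s \<in> span S" for s
      using that bound \<psi>_span by fastforce
    show "\<psi> (s + y) \<le> K * norm (s + y)" if "s \<in> span S" for s
      using that plus \<psi>_shift[of s 1] by simp
    show "\<psi> (s - y) \<le> K * norm (s - y)" if "s \<in> span S" for s
      using that minus \<psi>_shift[of s "- 1"] by simp
  qed
  have "\<bar>\<psi> x\<bar> \<le> K * norm x" if "x \<in> span (insert y S)" for x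
    using upper[OF that] upper[OF span_neg[OF that]] linear_neg[OF lin_\<psi>] by (simp add: abs_le_iff)
  with lin_\<psi> \<psi>_span show thesis
    by (intro that) auto
qed

definition bounded_biorthogonal :: "(nat \<Rightarrow> 'a::real_normed_vector) \<Rightarrow> (nat \<Rightarrow> real) \<Rightarrow> nat \<Rightarrow> bool"
  where "bounded_biorthogonal u K N \<longleftrightarrow>
    (\<forall>j<N. 0 \<le> K j \<and> (\<exists>\<phi>. linear \<phi> \<and> (\<forall>i<N. \<phi> (u i) = (if i = j then 1 else 0)) \<and>
       (\<forall>x\<in>span (u ` {..<N}). \<bar>\<phi> x\<bar> \<le> K j * norm x)))"

lemma bounded_biorthogonal_cong:
  assumes "bounded_biorthogonal u K N" "\<forall>i<N. u' i = u i" "\<forall>i<N. K' i = K i"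
  shows "bounded_biorthogonal u' K' N"
proof -
  have "u' ` {..<N} = u ` {..<N}"
    using assms(2) by (auto simp: image_def)
  then show ?thesis
    using assms unfolding bounded_biorthogonal_def by simp
qed

lemma bounded_biorthogonal_coeff_le:
  assumes "bounded_biorthogonal u K N" "j < N"
  shows "\<bar>c j\<bar> \<le> K j * norm (\<Sum>i<N. c i *\<^sub>R u i)"
proof -
  obtain \<phi> where \<phi>: "linear \<phi>" "\<forall>i<N. \<phi> (u i) = (if i = j then 1 else 0)"
    "\<forall>x\<in>span (u ` {..<N}). \<bar>\<phi> x\<bar> \<le> K j * norm x"
    using assms unfolding bounded_biorthogonal_def by blast
  have "(\<Sum>i<N. c i *\<^sub>R u i) \<in> span (u ` {..<N})"
    by (intro span_sum span_scale span_base) auto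
  then show ?thesis
    using \<phi> linear_sum_biorthogonal[OF \<phi>(1,2) assms(2)] by metis
qed

lemma bounded_biorthogonal_extend_functionals:
  fixes u :: "nat \<Rightarrow> 'a::real_normed_vector"
  assumes bior: "bounded_biorthogonal u K N" and y: "y \<notin> span (u ` {..<N})"
  obtains \<psi> where "\<And>j. j < N \<Longrightarrow> linear (\<psi> j)"
    "\<And>i j. i < N \<Longrightarrow> j < N \<Longrightarrow> \<psi> j (u i) = (if i = j then 1 else 0)"
    "\<And>j x. j < N \<Longrightarrow> x \<in> span (insert y (u ` {..<N})) \<Longrightarrow> \<bar>\<psi> j x\<bar> \<le> K j * norm x"
proof -
  define S where "S = u ` {..<N}"
  have "\<forall>j\<in>{..<N}. \<exists>\<psi>. linear \<psi> \<and> (\<forall>i<N. \<psi> (u i) = (if i = j then 1 else 0)) \<and>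
      (\<forall>x\<in>span (insert y S). \<bar>\<psi> x\<bar> \<le> K j * norm x)"
  proof
    fix j assume "j \<in> {..<N}"
    then obtain \<phi> where "0 \<le> K j" and \<phi>: "linear \<phi>" "\<forall>i<N. \<phi> (u i) = (if i = j then 1 else 0)"
      "\<forall>x\<in>span S. \<bar>\<phi> x\<bar> \<le> K j * norm x"
      using bior unfolding bounded_biorthogonal_def S_def by auto
    moreover have "y \<notin> span S"
      using y by (simp add: S_def)
    ultimately obtain \<psi> where \<psi>: "linear \<psi>" "\<forall>x\<in>span S. \<psi> x = \<phi> x"
      "\<forall>x\<in>span (insert y S). \<bar>\<psi> x\<bar> \<le> K j * norm x"
      by (blast elim: bounded_functional_extend_insert)
    have "\<forall>i<N. \<psi> (u i) = (if i = j then 1 else 0)"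
      using \<psi>(2) \<phi>(2) by (simp add: S_def span_base)
    with \<psi>(1,3) show "\<exists>\<psi>. linear \<psi> \<and> (\<forall>i<N. \<psi> (u i) = (if i = j then 1 else 0)) \<and>
      (\<forall>x\<in>span (insert y S). \<bar>\<psi> x\<bar> \<le> K j * norm x)"
      by blast
  qed
  from bchoice[OF this] obtain \<psi> where "\<forall>j\<in>{..<N}. linear (\<psi> j) \<and>
      (\<forall>i<N. \<psi> j (u i) = (if i = j then 1 else 0)) \<and>
      (\<forall>x\<in>span (insert y S). \<bar>\<psi> j x\<bar> \<le> K j * norm x)"
    by blast
  then show thesis
    by (intro that) (auto simp: S_def)
qed

lemma biorthogonal_new_coordinate_bound:
  fixes u :: "nat \<Rightarrow> 'a::real_normed_vector"
  assumes lin: "\<And>j. j < N \<Longrightarrow> linear (\<psi> j)"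
    and biorth: "\<And>i j. i < N \<Longrightarrow> j < N \<Longrightarrow> \<psi> j (u i) = (if i = j then 1 else 0)"
    and \<psi>_v: "\<And>j. j < N \<Longrightarrow> \<psi> j v = 0"
    and \<alpha>: "linear \<alpha>" "\<alpha> v = 1" "\<forall>x\<in>span (u ` {..<N}). \<alpha> x = 0"
    and x: "x \<in> span (insert v (u ` {..<N}))" and bound: "\<And>j. j < N \<Longrightarrow> \<bar>\<psi> j x\<bar> \<le> K j * norm x"
  shows "\<bar>\<alpha> x\<bar> * norm v \<le> (1 + (\<Sum>i<N. K i * norm (u i))) * norm x"
proof -
  obtain a where a: "x - a *\<^sub>R v \<in> span (u ` {..<N})"
    using x span_breakdown_eq by blast
  have "\<alpha> (x - a *\<^sub>R v) = 0"
    using \<alpha>(3) a by blast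
  then have "a = \<alpha> x"
    using \<alpha>(1,2) by (simp add: linear_diff linear_cmul)
  with a lin biorth have "x - \<alpha> x *\<^sub>R v = (\<Sum>i<N. \<psi> i (x - \<alpha> x *\<^sub>R v) *\<^sub>R u i)"
    by (intro biorthogonal_expansion) auto
  also have "\<dots> = (\<Sum>i<N. \<psi> i x *\<^sub>R u i)"
    using lin \<psi>_v by (intro sum.cong) (simp_all add: linear_diff linear_cmul)
  finally have expansion: "x - \<alpha> x *\<^sub>R v = (\<Sum>i<N. \<psi> i x *\<^sub>R u i)" .
  have "\<bar>\<alpha> x\<bar> * norm v = norm (x - (\<Sum>i<N. \<psi> i x *\<^sub>R u i))"
    by (simp add: expansion[symmetric])
  also have "\<dots> \<le> norm x + (\<Sum>i<N. norm (\<psi> i x *\<^sub>R u i))"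
    using norm_triangle_ineq4 norm_sum by (rule order_trans[OF _ add_left_mono])
  also have "\<dots> \<le> norm x + (\<Sum>i<N. K i * norm x * norm (u i))"
    using bound by (intro add_left_mono sum_mono) (auto intro!: mult_right_mono)
  also have "\<dots> = (1 + (\<Sum>i<N. K i * norm (u i))) * norm x"
    by (simp add: sum_distrib_left sum_distrib_right algebra_simps)
  finally show ?thesis .
qed

lemma bounded_biorthogonal_SucI:
  assumes K: "\<And>j. j < N \<Longrightarrow> 0 \<le> K j" "0 \<le> k"
    and \<psi>: "\<And>j. j < N \<Longrightarrow> linear (\<psi> j)"
      "\<And>i j. i < N \<Longrightarrow> j < N \<Longrightarrow> \<psi> j (u i) = (if i = j then 1 else 0)"
      "\<And>j. j < N \<Longrightarrow> \<psi> j v = 0"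
      "\<And>j x. j < N \<Longrightarrow> x \<in> span (insert v (u ` {..<N})) \<Longrightarrow> \<bar>\<psi> j x\<bar> \<le> K j * norm x"
    and \<alpha>: "linear \<alpha>" "\<And>i. i < N \<Longrightarrow> \<alpha> (u i) = 0" "\<alpha> v = 1"
      "\<And>x. x \<in> span (insert v (u ` {..<N})) \<Longrightarrow> \<bar>\<alpha> x\<bar> \<le> k * norm x"
  shows "bounded_biorthogonal (u(N := v)) (K(N := k)) (Suc N)"
proof -
  have img: "(u(N := v)) ` {..<Suc N} = insert v (u ` {..<N})"
    by (auto simp: lessThan_Suc)
  show ?thesis
    unfolding bounded_biorthogonal_def img
  proof (intro allI impI conjI)
    fix j assume j: "j < Suc N"
    show "0 \<le> (K(N := k)) j"
      using K j by (auto simp: less_Suc_eq)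
    show "\<exists>\<phi>. linear \<phi> \<and> (\<forall>i<Suc N. \<phi> ((u(N := v)) i) = (if i = j then 1 else 0)) \<and>
        (\<forall>x\<in>span (insert v (u ` {..<N})). \<bar>\<phi> x\<bar> \<le> (K(N := k)) j * norm x)"
    proof (cases "j < N")
      case True
      then show ?thesis
        using \<psi> by (intro exI[of _ "\<psi> j"]) (auto simp: less_Suc_eq)
    next
      case False
      with j have "j = N"
        by simp
      then show ?thesis
        using \<alpha> by (intro exI[of _ \<alpha>]) (auto simp: less_Suc_eq)
    qed
  qed
qed

lemma bounded_biorthogonal_extend:
  fixes u :: "nat \<Rightarrow> 'a::real_normed_vector"
  assumes bior: "bounded_biorthogonal u K N" and y: "y \<notin> span (u ` {..<N})"
  obtains v k where "bounded_biorthogonal (u(N := v)) (K(N := k)) (Suc N)"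
proof -
  define S where "S = u ` {..<N}"
  obtain \<psi> where \<psi>: "\<And>j. j < N \<Longrightarrow> linear (\<psi> j)"
    "\<And>i j. i < N \<Longrightarrow> j < N \<Longrightarrow> \<psi> j (u i) = (if i = j then 1 else 0)"
    "\<And>j x. j < N \<Longrightarrow> x \<in> span (insert y S) \<Longrightarrow> \<bar>\<psi> j x\<bar> \<le> K j * norm x"
    using bounded_biorthogonal_extend_functionals[OF bior y] unfolding S_def by blast
  obtain \<alpha> :: "'a \<Rightarrow> real" where \<alpha>: "linear \<alpha>" "\<alpha> y = 1" "\<forall>x\<in>span S. \<alpha> x = 0"
    using exists_linear_functional_vanishing_on_span[of y S] y unfolding S_def by blast
  have u_S: "u i \<in> span S" if "i < N" for i
    using that by (auto simp: S_def intro: span_base)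
  have K: "0 \<le> K j" if "j < N" for j
    using bior that unfolding bounded_biorthogonal_def by blast
  \<comment> \<open>Correcting \<open>y\<close> into the kernels of the \<open>\<psi> j\<close> keeps the old coordinates valid.\<close>
  define v where "v = y - (\<Sum>i<N. \<psi> i y *\<^sub>R u i)"
  have \<alpha>_u: "\<alpha> (u i) = 0" if "i < N" for i
    using \<alpha>(3) u_S[OF that] by blast
  have \<alpha>_v: "\<alpha> v = 1"
    using \<alpha>(1,2) \<alpha>_u by (simp add: v_def linear_diff linear_sum linear_cmul)
  have \<psi>_v: "\<psi> j v = 0" if "j < N" for j
    using linear_sum_biorthogonal[OF \<psi>(1)[OF that], of N u j "\<lambda>i. \<psi> i y"] \<psi>(2) that
    by (simp add: v_def linear_diff[OF \<psi>(1)[OF that]])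
  have "insert v S \<subseteq> span (insert y S)"
    unfolding v_def using u_S
    by (auto intro!: span_diff span_sum span_scale intro: span_base span_mono[THEN subsetD, of S])
  then have span_v: "span (insert v S) \<subseteq> span (insert y S)"
    by (metis span_minimal subspace_span)
  have "v \<noteq> 0"
    using \<alpha>_v \<alpha>(1) linear_0 by force
  define k where "k = (1 + (\<Sum>i<N. K i * norm (u i))) / norm v"
  have "0 \<le> k"
    unfolding k_def using K by (auto intro!: divide_nonneg_nonneg add_nonneg_nonneg sum_nonneg)
  have \<alpha>_bound: "\<bar>\<alpha> x\<bar> \<le> k * norm x" if x: "x \<in> span (insert v S)" for x
  proof -
    have "\<bar>\<alpha> x\<bar> * norm v \<le> (1 + (\<Sum>i<N. K i * norm (u i))) * norm x"
      using \<psi>(1,2) \<psi>_v \<alpha>(1) \<alpha>_v \<alpha>(3) x \<psi>(3) span_v unfolding S_def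
      by (intro biorthogonal_new_coordinate_bound[where \<psi> = \<psi>]) auto
    then show ?thesis
      using \<open>v \<noteq> 0\<close> by (simp add: k_def field_simps)
  qed
  have "bounded_biorthogonal (u(N := v)) (K(N := k)) (Suc N)"
    using K \<open>0 \<le> k\<close> \<psi>(1,2) \<psi>_v \<psi>(3) span_v \<alpha>(1) \<alpha>_u \<alpha>_v \<alpha>_bound unfolding S_def
    by (intro bounded_biorthogonal_SucI[where \<psi> = \<psi> and \<alpha> = \<alpha>]) auto
  then show thesis
    by (rule that)
qed

lemma nat_sequence_by_extension:
  assumes start: "P s\<^sub>0 0"
    and cong: "\<And>s s' n. P s n \<Longrightarrow> \<forall>i<n. s' i = s i \<Longrightarrow> P s' n"
    and extend: "\<And>s n. P s n \<Longrightarrow> \<exists>a. P (s(n := a)) (Suc n)"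
  obtains s where "\<And>n. P s n"
proof -
  have "\<exists>f. \<forall>n. P (f n) n \<and> (\<exists>a. f (Suc n) = (f n)(n := a))"
  proof (rule dependent_nat_choice)
    show "\<exists>s. P s 0"
      using start by blast
    show "\<exists>s'. P s' (Suc n) \<and> (\<exists>a. s' = s(n := a))" if "P s n" for s n
      using extend[OF that] by blast
  qed
  then obtain f where f: "\<And>n. P (f n) n" "\<And>n. \<exists>a. f (Suc n) = (f n)(n := a)"
    by blast
  have stable: "\<forall>i<n. f n i = f (Suc i) i" for n
  proof (induction n)
    case (Suc n)
    obtain a where "f (Suc n) = (f n)(n := a)"
      using f(2) by blast
    with Suc.IH show ?case
      by (auto simp: less_Suc_eq)
  qed simp
  show thesis
  proof (rule that)
    show "P (\<lambda>i. f (Suc i) i) n" for n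
    proof (rule cong[OF f(1)])
      show "\<forall>i<n. f (Suc i) i = f n i"
        using stable[of n] by simp
    qed
  qed
qed

lemma exists_bounded_biorthogonal_sequence:
  assumes "infinite_dimensional TYPE('a)"
  obtains u :: "nat \<Rightarrow> 'a::real_normed_vector" and K where "\<And>N. bounded_biorthogonal u K N"
proof -
  define P where "P p N \<longleftrightarrow> bounded_biorthogonal (fst \<circ> p) (snd \<circ> p) N" for p :: "nat \<Rightarrow> 'a \<times> real" and N
  have start: "P (\<lambda>_. (0, 0)) 0"
    by (simp add: P_def bounded_biorthogonal_def)
  have cong: "P p' N" if "P p N" "\<forall>i<N. p' i = p i" for p p' N
    using that bounded_biorthogonal_cong[of "fst \<circ> p" "snd \<circ> p" N "fst \<circ> p'" "snd \<circ> p'"]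
    unfolding P_def by simp
  have extend: "\<exists>a. P (p(N := a)) (Suc N)" if "P p N" for p N
  proof -
    have "finite ((fst \<circ> p) ` {..<N})"
      by simp
    then have "span ((fst \<circ> p) ` {..<N}) \<noteq> UNIV"
      using assms unfolding infinite_dimensional_def by blast
    then obtain y where "y \<notin> span ((fst \<circ> p) ` {..<N})"
      by blast
    with that obtain v k where "bounded_biorthogonal ((fst \<circ> p)(N := v)) ((snd \<circ> p)(N := k)) (Suc N)"
      unfolding P_def by (rule bounded_biorthogonal_extend)
    moreover have "fst \<circ> p(N := (v, k)) = (fst \<circ> p)(N := v)" "snd \<circ> p(N := (v, k)) = (snd \<circ> p)(N := k)"
      by (simp_all add: fun_eq_iff)
    ultimately have "P (p(N := (v, k))) (Suc N)"
      unfolding P_def by simp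
    then show ?thesis ..
  qed
  obtain p where "\<And>N. P p N"
    using nat_sequence_by_extension[of P, OF start] cong extend by blast
  then show thesis
    using that unfolding P_def by blast
qed

section \<open>The entropy envelope\<close>

text \<open>Terms with \<open>\<mu> i = 0\<close> vanish whatever \<open>log 2 (1 / 0)\<close> is, as in the convention \<open>0 log 0 = 0\<close>.\<close>

definition entropy :: "(nat \<Rightarrow> real) \<Rightarrow> nat \<Rightarrow> real"
  where "entropy \<mu> k = (\<Sum>i<k. \<mu> i * log 2 (1 / \<mu> i))"

definition convex_decomposition :: "nat \<Rightarrow> (nat \<Rightarrow> real) \<Rightarrow> (nat \<Rightarrow> 'a::real_vector) \<Rightarrow> 'a \<Rightarrow> bool"
  where "convex_decomposition k \<mu> y x \<longleftrightarrow>
    (\<forall>i<k. 0 \<le> \<mu> i) \<and> (\<Sum>i<k. \<mu> i) = 1 \<and> (\<Sum>i<k. \<mu> i *\<^sub>R y i) = x"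

definition envelope_costs :: "('a::real_vector \<Rightarrow> real) \<Rightarrow> 'a \<Rightarrow> real set"
  where "envelope_costs h x =
    {entropy \<mu> k + (\<Sum>i<k. \<mu> i * h (y i)) | k \<mu> y. convex_decomposition k \<mu> y x}"

definition entropy_envelope :: "('a::real_vector \<Rightarrow> real) \<Rightarrow> 'a \<Rightarrow> real"
  where "entropy_envelope h x = Inf (envelope_costs h x)"

lemma convex_decomposition_weight_le_1:
  assumes "convex_decomposition k \<mu> y x" "i < k"
  shows "\<mu> i \<le> 1"
proof -
  have "\<mu> i \<le> (\<Sum>i<k. \<mu> i)"
    using assms by (intro member_le_sum) (auto simp: convex_decomposition_def)
  then show ?thesis
    using assms(1) by (simp add: convex_decomposition_def)
qed

lemma entropy_term_nonneg: "0 \<le> m \<Longrightarrow> m \<le> 1 \<Longrightarrow> 0 \<le> m * log 2 (1 / m)"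
  by (cases "m = 0") auto

lemma entropy_nonneg:
  assumes "convex_decomposition k \<mu> y x"
  shows "0 \<le> entropy \<mu> k"
  unfolding entropy_def using assms convex_decomposition_weight_le_1[OF assms]
  by (intro sum_nonneg entropy_term_nonneg) (auto simp: convex_decomposition_def)

lemma entropy_ge_mass_log:
  assumes "convex_decomposition k \<mu> y x" and "\<And>i. i < k \<Longrightarrow> P i \<Longrightarrow> \<mu> i \<le> q" and "0 < q"
  shows "(\<Sum>i<k. if P i then \<mu> i else 0) * log 2 (1 / q) \<le> entropy \<mu> k"
  unfolding entropy_def sum_distrib_right
proof (rule sum_mono)
  fix i assume i: "i \<in> {..<k}"
  have \<mu>: "0 \<le> \<mu> i" "\<mu> i \<le> 1"
    using assms(1) i convex_decomposition_weight_le_1[OF assms(1)] by (auto simp: convex_decomposition_def)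
  show "(if P i then \<mu> i else 0) * log 2 (1 / q) \<le> \<mu> i * log 2 (1 / \<mu> i)"
  proof (cases "P i \<and> 0 < \<mu> i")
    case True
    then have "log 2 (1 / q) \<le> log 2 (1 / \<mu> i)"
      using assms(2,3) i by (auto simp: frac_le)
    then show ?thesis
      using True \<mu> by (simp add: mult_left_mono)
  next
    case False
    then show ?thesis
      using \<mu> entropy_term_nonneg by auto
  qed
qed

lemma envelope_costs_nonneg:
  assumes "\<And>z. 0 \<le> h z" "c \<in> envelope_costs h x"
  shows "0 \<le> c"
proof -
  obtain k \<mu> y where c: "c = entropy \<mu> k + (\<Sum>i<k. \<mu> i * h (y i))" and d: "convex_decomposition k \<mu> y x"
    using assms(2) unfolding envelope_costs_def by blast
  have "0 \<le> (\<Sum>i<k. \<mu> i * h (y i))"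
    using d assms(1) by (intro sum_nonneg mult_nonneg_nonneg) (auto simp: convex_decomposition_def)
  with entropy_nonneg[OF d] show ?thesis
    unfolding c by simp
qed

lemma value_in_envelope_costs: "h x \<in> envelope_costs h x"
  unfolding envelope_costs_def
  by (intro CollectI exI[of _ "Suc 0"] exI[of _ "\<lambda>_. 1"] exI[of _ "\<lambda>_. x"])
    (simp add: entropy_def convex_decomposition_def)

lemma envelope_costs_nonempty: "envelope_costs h x \<noteq> {}"
  using value_in_envelope_costs by blast

lemma bdd_below_envelope_costs: "(\<And>z. 0 \<le> h z) \<Longrightarrow> bdd_below (envelope_costs h x)"
  using envelope_costs_nonneg unfolding bdd_below_def by blast

lemma entropy_envelope_le: "(\<And>z. 0 \<le> h z) \<Longrightarrow> entropy_envelope h x \<le> h x"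
  unfolding entropy_envelope_def
  by (rule cInf_lower[OF value_in_envelope_costs bdd_below_envelope_costs])

lemma entropy_envelope_translate_le:
  fixes h :: "'a::real_normed_vector \<Rightarrow> real"
  assumes nonneg: "\<And>z. 0 \<le> h z" and lip: "L-lipschitz_on UNIV h"
  shows "entropy_envelope h x' \<le> entropy_envelope h x + L * dist x' x"
proof -
  have "entropy_envelope h x' - L * dist x' x \<le> c" if c_cost: "c \<in> envelope_costs h x" for c
  proof -
    obtain k \<mu> y where c: "c = entropy \<mu> k + (\<Sum>i<k. \<mu> i * h (y i))" and d: "convex_decomposition k \<mu> y x"
      using c_cost unfolding envelope_costs_def by blast
    define y' where "y' i = y i + (x' - x)" for i
    have "(\<Sum>i<k. \<mu> i *\<^sub>R y' i) = (\<Sum>i<k. \<mu> i *\<^sub>R y i) + (\<Sum>i<k. \<mu> i) *\<^sub>R (x' - x)"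
      unfolding y'_def by (simp add: scaleR_add_right sum.distrib scaleR_sum_left)
    with d have d': "convex_decomposition k \<mu> y' x'"
      by (simp add: convex_decomposition_def)
    have "(\<Sum>i<k. \<mu> i * h (y' i)) \<le> (\<Sum>i<k. \<mu> i * (h (y i) + L * dist x' x))"
    proof (rule sum_mono)
      fix i assume "i \<in> {..<k}"
      then have "0 \<le> \<mu> i"
        using d by (simp add: convex_decomposition_def)
      moreover have "h (y' i) \<le> h (y i) + L * dist x' x"
        using lipschitz_onD[OF lip, of "y' i" "y i"] by (simp add: y'_def dist_norm dist_real_def)
      ultimately show "\<mu> i * h (y' i) \<le> \<mu> i * (h (y i) + L * dist x' x)"
        by (rule mult_left_mono[rotated])
    qed
    also have "\<dots> = (\<Sum>i<k. \<mu> i * h (y i)) + L * dist x' x"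
      using d by (simp add: convex_decomposition_def distrib_left sum.distrib sum_distrib_right[symmetric])
    finally have "entropy \<mu> k + (\<Sum>i<k. \<mu> i * h (y' i)) \<le> c + L * dist x' x"
      unfolding c by simp
    moreover have "entropy \<mu> k + (\<Sum>i<k. \<mu> i * h (y' i)) \<in> envelope_costs h x'"
      using d' unfolding envelope_costs_def by blast
    ultimately show ?thesis
      unfolding entropy_envelope_def
      using cInf_lower[OF _ bdd_below_envelope_costs[OF nonneg]] by fastforce
  qed
  then have "entropy_envelope h x' - L * dist x' x \<le> entropy_envelope h x"
    unfolding entropy_envelope_def[of h x] by (intro cInf_greatest[OF envelope_costs_nonempty])
  then show ?thesis
    by simp
qed

lemma entropy_envelope_lipschitz:
  fixes h :: "'a::real_normed_vector \<Rightarrow> real"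
  assumes "\<And>z. 0 \<le> h z" "L-lipschitz_on UNIV h"
  shows "L-lipschitz_on UNIV (entropy_envelope h)"
proof (rule lipschitz_onI)
  fix x y :: 'a
  show "dist (entropy_envelope h x) (entropy_envelope h y) \<le> L * dist x y"
    using entropy_envelope_translate_le[OF assms, of x y] entropy_envelope_translate_le[OF assms, of y x]
    by (simp add: dist_real_def dist_commute abs_le_iff)
  show "0 \<le> L"
    using assms(2) by (rule lipschitz_on_nonneg)
qed

lemma binary_entropy_le_1:
  fixes t :: real
  assumes "0 < t" "t < 1"
  shows "t * log 2 (1 / t) + (1 - t) * log 2 (1 / (1 - t)) \<le> 1"
proof -
  have half: "s * ln (1 / s) \<le> 1 / 2 - s + s * ln 2" if "0 < s" for s :: real
  proof -
    have "s * ln (1 / s) - s * ln 2 = s * ln (1 / (2 * s))"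
      using that by (simp add: ln_div ln_mult algebra_simps)
    also have "\<dots> \<le> s * (1 / (2 * s) - 1)"
      using that by (intro mult_left_mono ln_le_minus_one) simp_all
    also have "\<dots> = 1 / 2 - s"
      using that by (simp add: field_simps)
    finally show ?thesis
      by simp
  qed
  have "t * ln (1 / t) + (1 - t) * ln (1 / (1 - t)) \<le> ln 2"
    using half[of t] half[of "1 - t"] assms by (simp add: algebra_simps)
  then show ?thesis
    by (simp add: log_def add_divide_distrib[symmetric])
qed

lemma entropy_scale:
  assumes "0 < t" "convex_decomposition k \<mu> y x"
  shows "entropy (\<lambda>i. t * \<mu> i) k = t * log 2 (1 / t) + t * entropy \<mu> k"
proof -
  have "(t * \<mu> i) * log 2 (1 / (t * \<mu> i)) = t * log 2 (1 / t) * \<mu> i + t * (\<mu> i * log 2 (1 / \<mu> i))"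
    if "i < k" for i
  proof (cases "\<mu> i = 0")
    case False
    with assms that have "0 < \<mu> i"
      by (simp add: convex_decomposition_def order_less_le)
    with assms(1) have "log 2 (1 / (t * \<mu> i)) = log 2 (1 / t) + log 2 (1 / \<mu> i)"
      by (simp add: log_divide log_mult)
    then show ?thesis
      by (simp add: algebra_simps)
  qed simp
  then have "entropy (\<lambda>i. t * \<mu> i) k = t * log 2 (1 / t) * (\<Sum>i<k. \<mu> i) + t * entropy \<mu> k"
    unfolding entropy_def by (simp add: sum.distrib sum_distrib_left)
  with assms(2) show ?thesis
    by (simp add: convex_decomposition_def)
qed

lemma sum_lessThan_add:
  fixes f :: "nat \<Rightarrow> 'b::comm_monoid_add"
  shows "(\<Sum>i<k + l. f i) = (\<Sum>i<k. f i) + (\<Sum>i<l. f (i + k))"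
  by (induction l) (simp_all add: add_ac)

lemma envelope_costs_combination:
  assumes c1: "c1 \<in> envelope_costs h x" and c2: "c2 \<in> envelope_costs h x'" and t: "0 < t" "t < 1"
  obtains c where "c \<in> envelope_costs h (t *\<^sub>R x + (1 - t) *\<^sub>R x')" "c \<le> t * c1 + (1 - t) * c2 + 1"
proof -
  obtain k \<mu> y where c1_eq: "c1 = entropy \<mu> k + (\<Sum>i<k. \<mu> i * h (y i))" and d1: "convex_decomposition k \<mu> y x"
    using c1 unfolding envelope_costs_def by blast
  obtain l \<nu> w where c2_eq: "c2 = entropy \<nu> l + (\<Sum>i<l. \<nu> i * h (w i))" and d2: "convex_decomposition l \<nu> w x'"
    using c2 unfolding envelope_costs_def by blast
  define \<rho> where "\<rho> i = (if i < k then t * \<mu> i else (1 - t) * \<nu> (i - k))" for i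
  define z where "z i = (if i < k then y i else w (i - k))" for i
  have "convex_decomposition (k + l) \<rho> z (t *\<^sub>R x + (1 - t) *\<^sub>R x')"
    using d1 d2 t unfolding convex_decomposition_def sum_lessThan_add \<rho>_def z_def
    by (auto simp: sum_distrib_left[symmetric] scaleR_sum_right)
  then have cost: "entropy \<rho> (k + l) + (\<Sum>i<k + l. \<rho> i * h (z i)) \<in> envelope_costs h (t *\<^sub>R x + (1 - t) *\<^sub>R x')"
    unfolding envelope_costs_def by blast
  have "entropy \<rho> (k + l) = entropy (\<lambda>i. t * \<mu> i) k + entropy (\<lambda>i. (1 - t) * \<nu> i) l"
    unfolding entropy_def sum_lessThan_add \<rho>_def by simp
  also have "\<dots> = t * entropy \<mu> k + (1 - t) * entropy \<nu> l +
      (t * log 2 (1 / t) + (1 - t) * log 2 (1 / (1 - t)))"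
    using entropy_scale[OF _ d1, of t] entropy_scale[OF _ d2, of "1 - t"] t by simp
  also have "\<dots> \<le> t * entropy \<mu> k + (1 - t) * entropy \<nu> l + 1"
    using binary_entropy_le_1[OF t] by simp
  finally have "entropy \<rho> (k + l) \<le> t * entropy \<mu> k + (1 - t) * entropy \<nu> l + 1" .
  moreover have "(\<Sum>i<k + l. \<rho> i * h (z i)) = t * (\<Sum>i<k. \<mu> i * h (y i)) + (1 - t) * (\<Sum>i<l. \<nu> i * h (w i))"
    unfolding sum_lessThan_add \<rho>_def z_def by (simp add: sum_distrib_left mult.assoc)
  ultimately show thesis
    using cost c1_eq c2_eq by (intro that) (auto simp: algebra_simps)
qed

lemma le_convex_combination_cInf:
  fixes A B :: "real set"
  assumes "A \<noteq> {}" "B \<noteq> {}" "0 < t" "t < 1"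
    and le: "\<And>a b. a \<in> A \<Longrightarrow> b \<in> B \<Longrightarrow> z \<le> t * a + (1 - t) * b + e"
  shows "z \<le> t * Inf A + (1 - t) * Inf B + e"
proof -
  have "z \<le> t * Inf A + (1 - t) * b + e" if b: "b \<in> B" for b
  proof -
    have "(z - (1 - t) * b - e) / t \<le> Inf A"
    proof (rule cInf_greatest[OF assms(1)])
      fix a assume "a \<in> A"
      then show "(z - (1 - t) * b - e) / t \<le> a"
        using le[OF _ b] assms(3) by (fastforce simp: divide_le_eq mult.commute)
    qed
    then show ?thesis
      using assms(3) by (simp add: divide_le_eq algebra_simps)
  qed
  then have "(z - t * Inf A - e) / (1 - t) \<le> Inf B"
    using assms(2,4) by (intro cInf_greatest) (auto simp: divide_le_eq mult.commute algebra_simps)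
  then show ?thesis
    using assms(4) by (simp add: divide_le_eq algebra_simps)
qed

lemma entropy_envelope_approx_convex:
  assumes nonneg: "\<And>z. 0 \<le> h z"
  shows "approx_convex_on UNIV (entropy_envelope h)"
  unfolding approx_convex_on_def
proof (intro ballI allI impI)
  fix x x' :: 'a and t :: real
  assume "0 \<le> t \<and> t \<le> 1"
  then consider "t = 0" | "t = 1" | "0 < t" "t < 1"
    by linarith
  then show "entropy_envelope h (t *\<^sub>R x + (1 - t) *\<^sub>R x') \<le>
      t * entropy_envelope h x + (1 - t) * entropy_envelope h x' + 1"
  proof cases
    case 3
    show ?thesis
      unfolding entropy_envelope_def
    proof (rule le_convex_combination_cInf[OF envelope_costs_nonempty envelope_costs_nonempty 3])
      fix a b assume "a \<in> envelope_costs h x" "b \<in> envelope_costs h x'"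
      then obtain c where "c \<in> envelope_costs h (t *\<^sub>R x + (1 - t) *\<^sub>R x')" "c \<le> t * a + (1 - t) * b + 1"
        using envelope_costs_combination 3 by blast
      then show "Inf (envelope_costs h (t *\<^sub>R x + (1 - t) *\<^sub>R x')) \<le> t * a + (1 - t) * b + 1"
        using cInf_lower[OF _ bdd_below_envelope_costs[OF nonneg]] by fastforce
    qed
  qed simp_all
qed

section \<open>The envelope is large at barycentres of vertices\<close>

definition vertex_mass :: "(nat \<Rightarrow> real) \<Rightarrow> (nat \<Rightarrow> nat) \<Rightarrow> nat \<Rightarrow> nat \<Rightarrow> real"
  where "vertex_mass \<mu> \<iota> k j = (\<Sum>i<k. if \<iota> i = j then \<mu> i else 0)"

lemma sum_vertex_mass_scaleR:
  fixes w :: "nat \<Rightarrow> 'a::real_vector"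
  assumes "\<forall>i<k. \<iota> i < N"
  shows "(\<Sum>i<k. \<mu> i *\<^sub>R w (\<iota> i)) = (\<Sum>j<N. vertex_mass \<mu> \<iota> k j *\<^sub>R w j)"
proof -
  have "(\<Sum>j<N. vertex_mass \<mu> \<iota> k j *\<^sub>R w j) = (\<Sum>j<N. \<Sum>i<k. if \<iota> i = j then \<mu> i *\<^sub>R w j else 0)"
    unfolding vertex_mass_def scaleR_sum_left by (intro sum.cong) auto
  also have "\<dots> = (\<Sum>i<k. \<Sum>j<N. if \<iota> i = j then \<mu> i *\<^sub>R w j else 0)"
    by (rule sum.swap)
  also have "\<dots> = (\<Sum>i<k. \<mu> i *\<^sub>R w (\<iota> i))"
    using assms by (intro sum.cong) (auto simp: sum.delta')
  finally show ?thesis ..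
qed

lemma sum_vertex_mass:
  assumes "finite J"
  shows "(\<Sum>j\<in>J. vertex_mass \<mu> \<iota> k j) = (\<Sum>i<k. if \<iota> i \<in> J then \<mu> i else 0)"
  unfolding vertex_mass_def using assms by (subst sum.swap) (simp add: sum.delta')

lemma weight_le_vertex_mass:
  assumes "\<forall>i<k. 0 \<le> \<mu> i" "i < k"
  shows "\<mu> i \<le> vertex_mass \<mu> \<iota> k (\<iota> i)"
proof -
  have "(if \<iota> i = \<iota> i then \<mu> i else 0) \<le> (\<Sum>i'<k. if \<iota> i' = \<iota> i then \<mu> i' else 0)"
    using assms by (intro member_le_sum) auto
  then show ?thesis
    by (simp add: vertex_mass_def)
qed

lemma entropy_ge_balanced_vertex_mass:
  assumes d: "convex_decomposition k \<mu> y x" and J: "finite J" "card J = m" "2 \<le> m"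
    and balanced: "\<forall>j\<in>J. \<bar>1 / real m - vertex_mass \<mu> \<iota> k j\<bar> < 1 / (2 * real m)"
  shows "log 2 (2 * real m / 3) / 2 \<le> entropy \<mu> k"
proof -
  have m: "0 < real m"
    using J(3) by simp
  have lower: "1 / (2 * real m) \<le> vertex_mass \<mu> \<iota> k j" and upper: "vertex_mass \<mu> \<iota> k j \<le> 3 / (2 * real m)"
    if "j \<in> J" for j
  proof -
    have "1 / real m - 1 / (2 * real m) < vertex_mass \<mu> \<iota> k j" "vertex_mass \<mu> \<iota> k j < 1 / real m + 1 / (2 * real m)"
      using balanced that by (auto simp: abs_less_iff)
    moreover have "1 / real m - 1 / (2 * real m) = 1 / (2 * real m)" "1 / real m + 1 / (2 * real m) = 3 / (2 * real m)"
      using m by (simp_all add: field_simps)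
    ultimately show "1 / (2 * real m) \<le> vertex_mass \<mu> \<iota> k j" "vertex_mass \<mu> \<iota> k j \<le> 3 / (2 * real m)"
      by simp_all
  qed
  have "1 / 2 = (\<Sum>j\<in>J. 1 / (2 * real m))"
    using J m by simp
  also have "\<dots> \<le> (\<Sum>j\<in>J. vertex_mass \<mu> \<iota> k j)"
    using lower by (rule sum_mono)
  also have "\<dots> = (\<Sum>i<k. if \<iota> i \<in> J then \<mu> i else 0)"
    using J(1) by (rule sum_vertex_mass)
  finally have mass: "1 / 2 \<le> (\<Sum>i<k. if \<iota> i \<in> J then \<mu> i else 0)" .
  have "0 \<le> log 2 (2 * real m / 3)"
    using J(3) by simp
  then have "log 2 (2 * real m / 3) / 2 \<le> (\<Sum>i<k. if \<iota> i \<in> J then \<mu> i else 0) * log 2 (2 * real m / 3)"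
    using mult_right_mono[OF mass] by simp
  also have "\<dots> \<le> entropy \<mu> k"
  proof -
    have "\<mu> i \<le> 3 / (2 * real m)" if "i < k" "\<iota> i \<in> J" for i
      using weight_le_vertex_mass[of k \<mu> i \<iota>] d that upper by (force simp: convex_decomposition_def)
    then show ?thesis
      using entropy_ge_mass_log[OF d, of "\<lambda>i. \<iota> i \<in> J" "3 / (2 * real m)"] m by simp
  qed
  finally show ?thesis .
qed

lemma exists_near_vertices:
  fixes w :: "nat \<Rightarrow> 'a::real_normed_vector"
  assumes d: "convex_decomposition k \<mu> y x" and e: "0 < e"
  obtains \<iota> where "norm (x - (\<Sum>i<k. \<mu> i *\<^sub>R w (\<iota> i))) \<le> (\<Sum>i<k. \<mu> i * infdist (y i) (range w)) + e"
proof -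
  have "\<exists>j. dist (y i) (w j) < infdist (y i) (range w) + e" for i
  proof -
    have "Inf (dist (y i) ` range w) < infdist (y i) (range w) + e"
      using e by (simp add: infdist_notempty)
    then show ?thesis
      using cInf_lessD[of "dist (y i) ` range w"] by blast
  qed
  then obtain \<iota> where \<iota>: "\<And>i. dist (y i) (w (\<iota> i)) \<le> infdist (y i) (range w) + e"
    by (metis less_imp_le)
  have "x - (\<Sum>i<k. \<mu> i *\<^sub>R w (\<iota> i)) = (\<Sum>i<k. \<mu> i *\<^sub>R (y i - w (\<iota> i)))"
    using d by (simp add: convex_decomposition_def scaleR_diff_right sum_subtractf)
  then have "norm (x - (\<Sum>i<k. \<mu> i *\<^sub>R w (\<iota> i))) \<le> (\<Sum>i<k. norm (\<mu> i *\<^sub>R (y i - w (\<iota> i))))"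
    by (metis norm_sum)
  also have "\<dots> \<le> (\<Sum>i<k. \<mu> i * (infdist (y i) (range w) + e))"
    using d \<iota> by (intro sum_mono) (auto simp: convex_decomposition_def dist_norm intro!: mult_left_mono)
  also have "\<dots> = (\<Sum>i<k. \<mu> i * infdist (y i) (range w)) + e"
    using d by (simp add: convex_decomposition_def distrib_left sum.distrib sum_distrib_right[symmetric])
  finally show thesis
    by (rule that)
qed

lemma bounded_biorthogonal_vertex_mass_le:
  assumes bior: "bounded_biorthogonal u K N" and j: "j < N" and \<iota>: "\<forall>i<k. \<iota> i < N"
  shows "\<bar>R j * (a j - vertex_mass \<mu> \<iota> k j)\<bar> \<le>
    K j * norm ((\<Sum>j<N. a j *\<^sub>R R j *\<^sub>R u j) - (\<Sum>i<k. \<mu> i *\<^sub>R R (\<iota> i) *\<^sub>R u (\<iota> i)))"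
proof -
  have "(\<Sum>j<N. a j *\<^sub>R R j *\<^sub>R u j) - (\<Sum>i<k. \<mu> i *\<^sub>R R (\<iota> i) *\<^sub>R u (\<iota> i)) =
      (\<Sum>j<N. (R j * (a j - vertex_mass \<mu> \<iota> k j)) *\<^sub>R u j)"
    using sum_vertex_mass_scaleR[OF \<iota>, of \<mu> "\<lambda>j. R j *\<^sub>R u j"]
    by (simp add: sum_subtractf[symmetric] algebra_simps)
  then show ?thesis
    using bounded_biorthogonal_coeff_le[OF bior j, of "\<lambda>j. R j * (a j - vertex_mass \<mu> \<iota> k j)"] by simp
qed

lemma power_of_four_bounds:
  assumes "m = 4 ^ (n + 1)"
  shows "real n + 1 \<le> real m" "2 * real n + 1 \<le> log 2 (2 * real m / 3)"
proof -
  have "real (n + 1) < 2 ^ (n + 1)"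
    using less_exp[of "n + 1"] by (metis of_nat_less_iff of_nat_numeral of_nat_power)
  also have "(2::real) ^ (n + 1) \<le> 4 ^ (n + 1)"
    by (intro power_mono) simp_all
  finally show "real n + 1 \<le> real m"
    using assms by simp
  have "real m = 2 * 2 ^ (2 * n + 1)"
    using assms by (simp add: power_mult power_add)
  then have "(2::real) ^ (2 * n + 1) \<le> 2 * real m / 3"
    by simp
  moreover have "(0::real) < 2 ^ (2 * n + 1)"
    by simp
  moreover have "0 < m"
    using assms by simp
  ultimately have "log 2 (2 ^ (2 * n + 1)) \<le> log 2 (2 * real m / 3)"
    by (subst log_le_cancel_iff) auto
  moreover have "log 2 ((2::real) ^ (2 * n + 1)) = 2 * real n + 1"
    by (subst log_pow_cancel) simp_all
  ultimately show "2 * real n + 1 \<le> log 2 (2 * real m / 3)"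
    by simp
qed

lemma deviation_lt_of_cost_lt:
  fixes K C d :: real
  assumes K: "0 \<le> K" and C: "C < real n" and m: "real n + 1 \<le> real m" "real m \<le> real j"
    and deviation: "2 * (real j + 1)\<^sup>2 * (K + 1) * \<bar>d\<bar> \<le> K * (C + 1 / 2)"
  shows "\<bar>d\<bar> < 1 / (2 * real m)"
proof -
  define R where "R = 2 * (real j + 1)\<^sup>2 * (K + 1)"
  have "real m * (real n + 1) \<le> (real j + 1)\<^sup>2"
    using m unfolding power2_eq_square by (intro mult_mono) auto
  then have "2 * (K + 1) * (real m * (real n + 1)) \<le> 2 * (K + 1) * (real j + 1)\<^sup>2"
    using K by (intro mult_left_mono) simp_all
  then have large: "(K + 1) * (real n + 1) \<le> R * (1 / (2 * real m))"
    using m unfolding R_def by (simp add: field_simps)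
  have "K * (C + 1 / 2) \<le> K * (real n + 1 / 2)"
    using K C by (intro mult_left_mono) simp_all
  also have "\<dots> < (K + 1) * (real n + 1)"
    using K by (simp add: algebra_simps)
  finally have "R * \<bar>d\<bar> < R * (1 / (2 * real m))"
    using deviation large unfolding R_def by linarith
  moreover have "0 < R"
    using K unfolding R_def by (simp add: add_pos_nonneg)
  ultimately show ?thesis
    by (simp only: mult_less_cancel_left_pos)
qed

lemma barycentre_vertex_mass_deviation:
  fixes u :: "nat \<Rightarrow> 'a::real_normed_vector"
  assumes bior: "\<And>N. bounded_biorthogonal u K N" and R: "\<And>j. 0 \<le> R j"
    and h: "\<And>x. h x = infdist x (range (\<lambda>j. R j *\<^sub>R u j))"
    and J: "finite J" and d: "convex_decomposition k \<mu> y (\<Sum>j\<in>J. (1 / real m) *\<^sub>R R j *\<^sub>R u j)"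
  obtains \<iota> where "\<And>j. j \<in> J \<Longrightarrow>
    R j * \<bar>1 / real m - vertex_mass \<mu> \<iota> k j\<bar> \<le> K j * ((\<Sum>i<k. \<mu> i * h (y i)) + 1 / 2)"
proof -
  let ?c = "\<Sum>j\<in>J. (1 / real m) *\<^sub>R R j *\<^sub>R u j"
  have K: "0 \<le> K j" for j
    using bior[of "Suc j"] by (simp add: bounded_biorthogonal_def)
  obtain \<iota> where near: "norm (?c - (\<Sum>i<k. \<mu> i *\<^sub>R R (\<iota> i) *\<^sub>R u (\<iota> i))) \<le> (\<Sum>i<k. \<mu> i * h (y i)) + 1 / 2"
    using exists_near_vertices[OF d, of "1 / 2" "\<lambda>j. R j *\<^sub>R u j"] h by auto
  have "finite (\<iota> ` {..<k} \<union> J)"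
    using J by simp
  then obtain N where N: "\<iota> ` {..<k} \<union> J \<subseteq> {..<N}"
    using finite_nat_bounded by blast
  have "{..<N} \<inter> J = J"
    using N by blast
  then have "?c = (\<Sum>j\<in>{..<N} \<inter> J. (1 / real m) *\<^sub>R R j *\<^sub>R u j)"
    by simp
  also have "\<dots> = (\<Sum>j<N. if j \<in> J then (1 / real m) *\<^sub>R R j *\<^sub>R u j else 0)"
    by (rule sum.inter_restrict) simp
  also have "\<dots> = (\<Sum>j<N. (if j \<in> J then 1 / real m else 0) *\<^sub>R R j *\<^sub>R u j)"
    by (intro sum.cong) simp_all
  finally have c: "?c = (\<Sum>j<N. (if j \<in> J then 1 / real m else 0) *\<^sub>R R j *\<^sub>R u j)" .
  have "R j * \<bar>1 / real m - vertex_mass \<mu> \<iota> k j\<bar> \<le> K j * ((\<Sum>i<k. \<mu> i * h (y i)) + 1 / 2)"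
    if j: "j \<in> J" for j
  proof -
    have "R j * \<bar>1 / real m - vertex_mass \<mu> \<iota> k j\<bar> =
        \<bar>R j * ((if j \<in> J then 1 / real m else 0) - vertex_mass \<mu> \<iota> k j)\<bar>"
      using j R[of j] by (simp add: abs_mult)
    also have "\<dots> \<le> K j * norm (?c - (\<Sum>i<k. \<mu> i *\<^sub>R R (\<iota> i) *\<^sub>R u (\<iota> i)))"
      unfolding c using N j by (intro bounded_biorthogonal_vertex_mass_le bior) auto
    also have "\<dots> \<le> K j * ((\<Sum>i<k. \<mu> i * h (y i)) + 1 / 2)"
      using near K[of j] by (rule mult_left_mono)
    finally show ?thesis .
  qed
  then show thesis
    by (rule that)
qed

lemma entropy_envelope_barycentre_ge:
  fixes u :: "nat \<Rightarrow> 'a::real_normed_vector"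
  assumes bior: "\<And>N. bounded_biorthogonal u K N"
    and R: "\<And>j. R j = 2 * (real j + 1)\<^sup>2 * (K j + 1)"
    and h: "\<And>x. h x = infdist x (range (\<lambda>j. R j *\<^sub>R u j))"
    and m: "m = 4 ^ (n + 1)"
  shows "real n \<le> entropy_envelope h (\<Sum>j\<in>{m..<2 * m}. (1 / real m) *\<^sub>R R j *\<^sub>R u j)"
    (is "_ \<le> entropy_envelope h ?c")
  unfolding entropy_envelope_def
proof (rule cInf_greatest[OF envelope_costs_nonempty])
  fix C assume "C \<in> envelope_costs h ?c"
  then obtain k \<mu> y where C: "C = entropy \<mu> k + (\<Sum>i<k. \<mu> i * h (y i))"
    and d: "convex_decomposition k \<mu> y ?c"
    unfolding envelope_costs_def by blast
  define J where "J = {m..<2 * m}"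
  have K: "0 \<le> K j" for j
    using bior[of "Suc j"] by (simp add: bounded_biorthogonal_def)
  have R_pos: "0 < R j" for j
    using K[of j] unfolding R by (simp add: add_pos_nonneg)
  have "0 \<le> (\<Sum>i<k. \<mu> i * h (y i))"
    using d h by (intro sum_nonneg) (simp add: convex_decomposition_def infdist_nonneg)
  with entropy_nonneg[OF d] have C_ge: "entropy \<mu> k \<le> C" "(\<Sum>i<k. \<mu> i * h (y i)) \<le> C"
    unfolding C by simp_all
  obtain \<iota> where "\<And>j. j \<in> J \<Longrightarrow>
      R j * \<bar>1 / real m - vertex_mass \<mu> \<iota> k j\<bar> \<le> K j * ((\<Sum>i<k. \<mu> i * h (y i)) + 1 / 2)"
    using barycentre_vertex_mass_deviation[OF bior less_imp_le[OF R_pos] h _ d] by (auto simp: J_def)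
  then have deviation: "R j * \<bar>1 / real m - vertex_mass \<mu> \<iota> k j\<bar> \<le> K j * (C + 1 / 2)" if "j \<in> J" for j
    using that C_ge(2) K[of j] by (fastforce intro: order_trans mult_left_mono)
  show "real n \<le> C"
  proof (rule ccontr)
    assume "\<not> real n \<le> C"
    have m_ge: "real n + 1 \<le> real m" and log_ge: "2 * real n + 1 \<le> log 2 (2 * real m / 3)"
      using power_of_four_bounds[OF m] by simp_all
    have "\<bar>1 / real m - vertex_mass \<mu> \<iota> k j\<bar> < 1 / (2 * real m)" if "j \<in> J" for j
      using that deviation[OF that] K[of j] \<open>\<not> real n \<le> C\<close> m_ge unfolding J_def R[of j]
      by (intro deviation_lt_of_cost_lt) auto
    moreover have "(4::nat) ^ 1 \<le> 4 ^ (n + 1)"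
      by (intro power_increasing) simp_all
    ultimately have "log 2 (2 * real m / 3) / 2 \<le> entropy \<mu> k"
      using m by (intro entropy_ge_balanced_vertex_mass[OF d, of J m \<iota>]) (simp_all add: J_def)
    with log_ge C_ge(1) \<open>\<not> real n \<le> C\<close> show False
      by simp
  qed
qed

section \<open>Distance from convex functions\<close>

lemma convex_on_near_sum_le:
  assumes g: "convex_on S g" and near: "\<forall>x\<in>S. \<bar>f x - g x\<bar> \<le> M"
    and J: "finite J" "J \<noteq> {}" and a: "\<forall>j\<in>J. 0 \<le> a j" "sum a J = 1" and v: "\<forall>j\<in>J. v j \<in> S"
  shows "f (\<Sum>j\<in>J. a j *\<^sub>R v j) \<le> (\<Sum>j\<in>J. a j * f (v j)) + 2 * M"
proof -
  have "convex S"
    using g by (simp add: convex_on_def)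
  then have "(\<Sum>j\<in>J. a j *\<^sub>R v j) \<in> S"
    using J(1) a v by (intro convex_sum) auto
  then have "f (\<Sum>j\<in>J. a j *\<^sub>R v j) \<le> g (\<Sum>j\<in>J. a j *\<^sub>R v j) + M"
    using near by fastforce
  also have "g (\<Sum>j\<in>J. a j *\<^sub>R v j) \<le> (\<Sum>j\<in>J. a j * g (v j))"
    using convex_on_sum[OF J g] a v by auto
  also have "\<dots> \<le> (\<Sum>j\<in>J. a j * (f (v j) + M))"
    using a v near by (intro sum_mono mult_left_mono) force+
  also have "\<dots> = (\<Sum>j\<in>J. a j * f (v j)) + M"
    using a by (simp add: distrib_left sum.distrib sum_distrib_right[symmetric])
  finally show ?thesis
    by simp
qed

lemma SUP_abs_diff_convex_on_cball_gt:
  fixes v :: "'b \<Rightarrow> 'a::real_normed_vector" and f :: "'a \<Rightarrow> real"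
  assumes J: "finite J" "J \<noteq> {}" and a: "\<forall>j\<in>J. 0 \<le> a j" "sum a J = 1"
    and vertices: "\<forall>j\<in>J. f (v j) \<le> 0" and centre: "2 * M < f (\<Sum>j\<in>J. a j *\<^sub>R v j)"
  shows "\<exists>r>0. \<forall>g. convex_on (cball 0 r) g \<longrightarrow> (SUP x\<in>cball 0 r. ereal \<bar>f x - g x\<bar>) > ereal M"
proof -
  define r where "r = (\<Sum>j\<in>J. norm (v j)) + 1"
  have "0 \<le> (\<Sum>j\<in>J. norm (v j))"
    by (simp add: sum_nonneg)
  then have "0 < r"
    by (simp add: r_def)
  have v: "\<forall>j\<in>J. v j \<in> cball 0 r"
  proof
    fix j assume "j \<in> J"
    then have "norm (v j) \<le> (\<Sum>j\<in>J. norm (v j))"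
      using J(1) by (intro member_le_sum) simp_all
    then show "v j \<in> cball 0 r"
      by (simp add: r_def)
  qed
  have "(SUP x\<in>cball 0 r. ereal \<bar>f x - g x\<bar>) > ereal M" if g: "convex_on (cball 0 r) g" for g
  proof (rule ccontr)
    assume "\<not> ?thesis"
    then have "\<forall>x\<in>cball 0 r. \<bar>f x - g x\<bar> \<le> M"
      by (simp add: not_less SUP_le_iff)
    from convex_on_near_sum_le[OF g this J a v]
    have "f (\<Sum>j\<in>J. a j *\<^sub>R v j) \<le> (\<Sum>j\<in>J. a j * f (v j)) + 2 * M" .
    moreover have "(\<Sum>j\<in>J. a j * f (v j)) \<le> 0"
      using a vertices by (intro sum_nonpos) (simp add: mult_nonneg_nonpos)
    ultimately show False
      using centre by simp
  qed
  with \<open>0 < r\<close> show ?thesis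
    by blast
qed

lemma SUP_abs_diff_convex_UNIV_infinite:
  fixes f g :: "'a::real_normed_vector \<Rightarrow> real"
  assumes balls: "\<forall>M>0. \<exists>r>0. \<forall>g. convex_on (cball 0 r) g \<longrightarrow>
      (SUP x\<in>cball 0 r. ereal \<bar>f x - g x\<bar>) > ereal M"
    and g: "convex_on UNIV g"
  shows "(SUP x\<in>UNIV. ereal \<bar>f x - g x\<bar>) = \<infinity>"
proof (rule ereal_top)
  fix B :: real
  show "ereal B \<le> (SUP x\<in>UNIV. ereal \<bar>f x - g x\<bar>)"
  proof (cases "0 < B")
    case True
    then obtain r where "convex_on (cball 0 r) g \<longrightarrow> (SUP x\<in>cball 0 r. ereal \<bar>f x - g x\<bar>) > ereal B"
      using balls by blast
    moreover have "convex_on (cball 0 r) g"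
      using g by (rule convex_on_subset) simp_all
    moreover have "(SUP x\<in>cball 0 r. ereal \<bar>f x - g x\<bar>) \<le> (SUP x\<in>UNIV. ereal \<bar>f x - g x\<bar>)"
      by (rule SUP_subset_mono) simp_all
    ultimately show ?thesis
      by simp
  next
    case False
    then have "ereal B \<le> ereal \<bar>f 0 - g 0\<bar>"
      by simp
    also have "\<dots> \<le> (SUP x\<in>UNIV. ereal \<bar>f x - g x\<bar>)"
      by (rule SUP_upper) simp
    finally show ?thesis .
  qed
qed

lemma lipschitz_on_infdist: "1-lipschitz_on UNIV (\<lambda>x. infdist x A)"
  by (rule lipschitz_onI) (simp_all add: dist_real_def infdist_triangle_abs)

lemma entropy_envelope_far_from_convex:
  fixes u :: "nat \<Rightarrow> 'a::real_normed_vector"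
  assumes bior: "\<And>N. bounded_biorthogonal u K N"
    and R: "\<And>j. R j = 2 * (real j + 1)\<^sup>2 * (K j + 1)"
    and h: "\<And>x. h x = infdist x (range (\<lambda>j. R j *\<^sub>R u j))"
  shows "\<forall>M>0. \<exists>r>0. \<forall>g. convex_on (cball 0 r) g \<longrightarrow>
    (SUP x\<in>cball 0 r. ereal \<bar>entropy_envelope h x - g x\<bar>) > ereal M"
proof (intro allI impI)
  fix M :: real assume "0 < M"
  obtain n :: nat where n: "2 * M < real n"
    using reals_Archimedean2 by blast
  define m :: nat where "m = 4 ^ (n + 1)"
  have "real n \<le> entropy_envelope h (\<Sum>j\<in>{m..<2 * m}. (1 / real m) *\<^sub>R R j *\<^sub>R u j)"
    by (rule entropy_envelope_barycentre_ge[OF bior R h m_def])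
  with n have centre: "2 * M < entropy_envelope h (\<Sum>j\<in>{m..<2 * m}. (1 / real m) *\<^sub>R R j *\<^sub>R u j)"
    by linarith
  have "entropy_envelope h (R j *\<^sub>R u j) \<le> h (R j *\<^sub>R u j)" for j
    using h infdist_nonneg by (intro entropy_envelope_le) simp
  then have vertex: "entropy_envelope h (R j *\<^sub>R u j) \<le> 0" for j
    by (simp add: h)
  have "0 < m"
    by (simp add: m_def)
  then show "\<exists>r>0. \<forall>g. convex_on (cball 0 r) g \<longrightarrow>
      (SUP x\<in>cball 0 r. ereal \<bar>entropy_envelope h x - g x\<bar>) > ereal M"
    using vertex centre
    by (intro SUP_abs_diff_convex_on_cball_gt[where J = "{m..<2 * m}" and a = "\<lambda>_. 1 / real m"
          and v = "\<lambda>j. R j *\<^sub>R u j"]) simp_all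
qed

theorem corollary3p4:
  assumes "infinite_dimensional TYPE('a::real_normed_vector)"
  shows "\<exists>f :: 'a \<Rightarrow> real.
     1-lipschitz_on UNIV f \<and> approx_convex_on UNIV f \<and>
     (\<forall>M>0. \<exists>R>0. \<forall>g :: 'a \<Rightarrow> real. convex_on (cball 0 R) g \<longrightarrow>
        (SUP x\<in>cball 0 R. ereal \<bar>f x - g x\<bar>) > ereal M) \<and>
     (\<forall>g :: 'a \<Rightarrow> real. convex_on UNIV g \<longrightarrow>
        (SUP x\<in>UNIV. ereal \<bar>f x - g x\<bar>) = \<infinity>)"
proof -
  obtain u :: "nat \<Rightarrow> 'a" and K where bior: "\<And>N. bounded_biorthogonal u K N"
    using exists_bounded_biorthogonal_sequence[OF assms] by blast
  define R where "R j = 2 * (real j + 1)\<^sup>2 * (K j + 1)" for j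
  define h where "h x = infdist x (range (\<lambda>j. R j *\<^sub>R u j))" for x
  have h_nonneg: "\<And>x. 0 \<le> h x"
    by (simp add: h_def infdist_nonneg)
  have "1-lipschitz_on UNIV (entropy_envelope h)"
    unfolding h_def by (intro entropy_envelope_lipschitz infdist_nonneg lipschitz_on_infdist)
  moreover have "approx_convex_on UNIV (entropy_envelope h)"
    using h_nonneg by (rule entropy_envelope_approx_convex)
  moreover have far: "\<forall>M>0. \<exists>r>0. \<forall>g. convex_on (cball 0 r) g \<longrightarrow>
      (SUP x\<in>cball 0 r. ereal \<bar>entropy_envelope h x - g x\<bar>) > ereal M"
    by (rule entropy_envelope_far_from_convex[OF bior R_def h_def])
  ultimately show ?thesis
    using SUP_abs_diff_convex_UNIV_infinite[OF far] by blast
qed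

end
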